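(* Any two principle homomorphism dilation systems $(\pi_1,S_1,T_1,W_1)$ and $(\pi_2,S_2,T_2,W_2)$ of a linear system $(\varphi,\mathcal A,V)$ are equivalent. In particular every principle dilation system is equivalent to the canonical dilation.
   Context: Fix a field $\mathbb F$; all algebras and vector spaces are over $\mathbb F$, and $L(X)$ is the algebra of linear maps $X\to X$. A linear system $(\varphi,\mathcal A,V)$: $\mathcal A$ a unital associative algebra with unit $I$, $V$ a vector space, $\varphi:\mathcal A\to L(V)$ linear with $\varphi(I)=\mathrm{id}_V$. A homomorphism dilation system $(\pi,S,T,W)$: $W$ a vector space, $\pi:\mathcal A\to L(W)$ a unital homomorphism, $T:V\to W$ injective linear, $S:W\to V$ surjective linear, $\varphi(a)=S\pi(a)T$ for all $a$. It is linearly minimal if $W=\mathrm{span}\{\pi(a)Tv\}$, irreducible if $\ker S$ contains no nonzero subspace invariant under all $\pi(a)$, and principle if linearly minimal and irreducible. Two linearly minimal systems are equivalent if there is a bijective linear $R:W_1\to W_2$ with $RT_1=T_2$, $S_2R=S_1$, $\pi_1(a)=R^{-1}\pi_2(a)R$ for all $a$. Canonical dilation: $\alpha_{a,x}\in L(\mathcal A,V)$, $\alpha_{a,x}(b)=\varphi(ba)x$; $W_c=\mathrm{span}\{\alpha_{a,x}\}$; $\pi_c(a)\alpha_{b,x}=\alpha_{ab,x}$; $T_cx=\alpha_{I,x}$; $S_c(\alpha_{a,x})=\varphi(a)x$. *)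

theory Defs
  imports Complex_Main "HOL-Library.Function_Algebras"
begin

definition lin_on :: "('f \<Rightarrow> 'v::plus \<Rightarrow> 'v) \<Rightarrow> ('f \<Rightarrow> 'w::plus \<Rightarrow> 'w) \<Rightarrow> 'v set \<Rightarrow> ('v \<Rightarrow> 'w) \<Rightarrow> bool"
  where "lin_on s1 s2 X f \<longleftrightarrow>
     (\<forall>x\<in>X. \<forall>y\<in>X. f (x + y) = f x + f y) \<and> (\<forall>c. \<forall>x\<in>X. f (s1 c x) = s2 c (f x))"

text \<open>A unital associative algebra over the field 'f: the ring type 'a (ring_1 gives
  associativity and the unit 1 = I) which is an 'f-vector space via scaleA, with
  bilinear multiplication.\<close>
definition unital_algebra :: "('f::field \<Rightarrow> 'a::ring_1 \<Rightarrow> 'a) \<Rightarrow> bool"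
  where "unital_algebra scaleA \<longleftrightarrow> vector_space scaleA \<and>
     (\<forall>c x y. scaleA c (x * y) = scaleA c x * y \<and> scaleA c (x * y) = x * scaleA c y)"

definition linear_system :: "('f::field \<Rightarrow> 'a::ring_1 \<Rightarrow> 'a) \<Rightarrow> ('f \<Rightarrow> 'v::ab_group_add \<Rightarrow> 'v)
     \<Rightarrow> ('a \<Rightarrow> 'v \<Rightarrow> 'v) \<Rightarrow> bool"
  where "linear_system scaleA scaleV \<phi> \<longleftrightarrow>
     unital_algebra scaleA \<and> vector_space scaleV \<and>
     (\<forall>a. lin_on scaleV scaleV UNIV (\<phi> a)) \<and>
     (\<forall>a b x. \<phi> (a + b) x = \<phi> a x + \<phi> b x) \<and>
     (\<forall>c a x. \<phi> (scaleA c a) x = scaleV c (\<phi> a x)) \<and>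
     (\<forall>x. \<phi> 1 x = x)"

text \<open>Homomorphism dilation system (pi, S, T, W); W is a subspace of the vector space
  type 'w (with scalar multiplication scaleW), maps on W are only considered on W.\<close>
definition hom_dilation ::
  "('f::field \<Rightarrow> 'a::ring_1 \<Rightarrow> 'a) \<Rightarrow> ('f \<Rightarrow> 'v::ab_group_add \<Rightarrow> 'v) \<Rightarrow> ('f \<Rightarrow> 'w::ab_group_add \<Rightarrow> 'w)
   \<Rightarrow> ('a \<Rightarrow> 'v \<Rightarrow> 'v) \<Rightarrow> ('a \<Rightarrow> 'w \<Rightarrow> 'w) \<Rightarrow> ('w \<Rightarrow> 'v) \<Rightarrow> ('v \<Rightarrow> 'w) \<Rightarrow> 'w set \<Rightarrow> bool"
  where "hom_dilation scaleA scaleV scaleW \<phi> \<pi> S T W \<longleftrightarrow>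
     vector_space scaleW \<and> module.subspace scaleW W \<and>
     \<comment> \<open>pi : A -> L(W) is a unital algebra homomorphism\<close>
     (\<forall>a. \<forall>w\<in>W. \<pi> a w \<in> W) \<and>
     (\<forall>a. lin_on scaleW scaleW W (\<pi> a)) \<and>
     (\<forall>a b. \<forall>w\<in>W. \<pi> (a + b) w = \<pi> a w + \<pi> b w) \<and>
     (\<forall>c a. \<forall>w\<in>W. \<pi> (scaleA c a) w = scaleW c (\<pi> a w)) \<and>
     (\<forall>a b. \<forall>w\<in>W. \<pi> (a * b) w = \<pi> a (\<pi> b w)) \<and>
     (\<forall>w\<in>W. \<pi> 1 w = w) \<and>
     \<comment> \<open>T : V -> W injective linear\<close>
     lin_on scaleV scaleW UNIV T \<and> range T \<subseteq> W \<and> inj T \<and>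
     \<comment> \<open>S : W -> V surjective linear\<close>
     lin_on scaleW scaleV W S \<and> S ` W = UNIV \<and>
     (\<forall>a x. \<phi> a x = S (\<pi> a (T x)))"

definition linearly_minimal :: "('f::field \<Rightarrow> 'w::ab_group_add \<Rightarrow> 'w)
   \<Rightarrow> ('a \<Rightarrow> 'w \<Rightarrow> 'w) \<Rightarrow> ('v \<Rightarrow> 'w) \<Rightarrow> 'w set \<Rightarrow> bool"
  where "linearly_minimal scaleW \<pi> T W \<longleftrightarrow>
     W = module.span scaleW {\<pi> a (T v) | a v. True}"

definition irreducible_dil :: "('f::field \<Rightarrow> 'w::ab_group_add \<Rightarrow> 'w)
   \<Rightarrow> ('a \<Rightarrow> 'w \<Rightarrow> 'w) \<Rightarrow> ('w \<Rightarrow> 'v::zero) \<Rightarrow> 'w set \<Rightarrow> bool"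
  where "irreducible_dil scaleW \<pi> S W \<longleftrightarrow>
     (\<forall>U. module.subspace scaleW U \<and> U \<subseteq> {w \<in> W. S w = 0} \<and>
          (\<forall>a. \<forall>u\<in>U. \<pi> a u \<in> U) \<longrightarrow> U = {0})"

definition principle_dilation ::
  "('f::field \<Rightarrow> 'a::ring_1 \<Rightarrow> 'a) \<Rightarrow> ('f \<Rightarrow> 'v::ab_group_add \<Rightarrow> 'v) \<Rightarrow> ('f \<Rightarrow> 'w::ab_group_add \<Rightarrow> 'w)
   \<Rightarrow> ('a \<Rightarrow> 'v \<Rightarrow> 'v) \<Rightarrow> ('a \<Rightarrow> 'w \<Rightarrow> 'w) \<Rightarrow> ('w \<Rightarrow> 'v) \<Rightarrow> ('v \<Rightarrow> 'w) \<Rightarrow> 'w set \<Rightarrow> bool"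
  where "principle_dilation scaleA scaleV scaleW \<phi> \<pi> S T W \<longleftrightarrow>
     hom_dilation scaleA scaleV scaleW \<phi> \<pi> S T W \<and>
     linearly_minimal scaleW \<pi> T W \<and> irreducible_dil scaleW \<pi> S W"

definition equivalent_dil ::
  "('f::field \<Rightarrow> 'w1::ab_group_add \<Rightarrow> 'w1) \<Rightarrow> ('f \<Rightarrow> 'w2::ab_group_add \<Rightarrow> 'w2)
   \<Rightarrow> ('a \<Rightarrow> 'w1 \<Rightarrow> 'w1) \<Rightarrow> ('w1 \<Rightarrow> 'v) \<Rightarrow> ('v \<Rightarrow> 'w1) \<Rightarrow> 'w1 set
   \<Rightarrow> ('a \<Rightarrow> 'w2 \<Rightarrow> 'w2) \<Rightarrow> ('w2 \<Rightarrow> 'v) \<Rightarrow> ('v \<Rightarrow> 'w2) \<Rightarrow> 'w2 set \<Rightarrow> bool"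
  where "equivalent_dil scale1 scale2 \<pi>1 S1 T1 W1 \<pi>2 S2 T2 W2 \<longleftrightarrow>
     (\<exists>R. lin_on scale1 scale2 W1 R \<and> bij_betw R W1 W2 \<and>
          (\<forall>x. R (T1 x) = T2 x) \<and> (\<forall>w\<in>W1. S2 (R w) = S1 w) \<and>
          (\<forall>a. \<forall>w\<in>W1. \<pi>1 a w = inv_into W1 R (\<pi>2 a (R w))))"

text \<open>Canonical dilation, living in the function space L(A,V) \<subseteq> ('a \<Rightarrow> 'v).\<close>
definition canon_alpha :: "('a::times \<Rightarrow> 'v \<Rightarrow> 'v) \<Rightarrow> 'a \<Rightarrow> 'v \<Rightarrow> ('a \<Rightarrow> 'v)"
  where "canon_alpha \<phi> a x = (\<lambda>b. \<phi> (b * a) x)"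

definition canon_scale :: "('f \<Rightarrow> 'v \<Rightarrow> 'v) \<Rightarrow> 'f \<Rightarrow> ('a \<Rightarrow> 'v) \<Rightarrow> ('a \<Rightarrow> 'v)"
  where "canon_scale scaleV c f = (\<lambda>b. scaleV c (f b))"

definition canon_W :: "('f::field \<Rightarrow> 'v::ab_group_add \<Rightarrow> 'v) \<Rightarrow> ('a::times \<Rightarrow> 'v \<Rightarrow> 'v) \<Rightarrow> ('a \<Rightarrow> 'v) set"
  where "canon_W scaleV \<phi> = module.span (canon_scale scaleV) {canon_alpha \<phi> a x | a x. True}"

text \<open>pi_c(a) alpha_{b,x} = alpha_{ab,x}; its linear extension is right translation by a.\<close>
definition canon_pi :: "'a::times \<Rightarrow> ('a \<Rightarrow> 'v) \<Rightarrow> ('a \<Rightarrow> 'v)"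
  where "canon_pi a f = (\<lambda>c. f (c * a))"

definition canon_T :: "('a::monoid_mult \<Rightarrow> 'v \<Rightarrow> 'v) \<Rightarrow> 'v \<Rightarrow> ('a \<Rightarrow> 'v)"
  where "canon_T \<phi> x = canon_alpha \<phi> 1 x" 

text \<open>S_c(alpha_{a,x}) = phi(a) x = alpha_{a,x}(I); its linear extension is evaluation at I.\<close>
definition canon_S :: "('a::one \<Rightarrow> 'v) \<Rightarrow> 'v"
  where "canon_S f = f 1"

end

theory Submission
  imports Defs
begin

text \<open>A homomorphism dilation \<open>(\<pi>, S, T, W)\<close> is compared with the canonical one through
  \<open>w \<mapsto> (b \<mapsto> S (\<pi> b w))\<close>. This map is linear, turns \<open>\<pi> a\<close> into right translation by \<open>a\<close>,
  \<open>T\<close> into \<open>T\<^sub>c\<close> and \<open>S\<close> into evaluation at \<open>I\<close>. Its kernel is a \<open>\<pi>\<close>-invariant subspace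
  of \<open>ker S\<close>, so it is injective when the dilation is irreducible, and it maps the span of the
  \<open>\<pi> a (T x)\<close> onto the span of the \<open>\<alpha>\<^bsub>a,x\<^esub>\<close>, so it is onto \<open>W\<^sub>c\<close> when the dilation is
  linearly minimal. Two principle dilations are then equivalent through the canonical one.\<close>

lemma lin_on_zero:
  fixes f :: "'v::ab_group_add \<Rightarrow> 'w::ab_group_add"
  assumes "lin_on s1 s2 X f" and "0 \<in> X"
  shows "f 0 = 0"
proof -
  have "f (0 + 0) = f 0 + f 0"
    using assms unfolding lin_on_def by blast
  then show ?thesis by simp
qed

lemma lin_on_image_span:
  fixes f :: "'v::ab_group_add \<Rightarrow> 'w::ab_group_add"
  assumes m1: "module s1" and m2: "module s2"
    and f: "lin_on s1 s2 (module.span s1 G) f"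
  shows "f ` module.span s1 G = module.span s2 (f ` G)"
proof
  let ?P = "{x \<in> module.span s1 G. f x \<in> module.span s2 (f ` G)}"
  have "module.subspace s1 ?P"
  proof (rule module.subspaceI[OF m1])
    have "f 0 = 0"
      using f module.span_zero[OF m1] by (rule lin_on_zero)
    then show "0 \<in> ?P"
      using module.span_zero[OF m1] module.span_zero[OF m2] by simp
  next
    fix x y assume "x \<in> ?P" "y \<in> ?P"
    then show "x + y \<in> ?P"
      using f unfolding lin_on_def by (simp add: module.span_add[OF m1] module.span_add[OF m2])
  next
    fix c x assume "x \<in> ?P"
    then show "s1 c x \<in> ?P"
      using f unfolding lin_on_def by (simp add: module.span_scale[OF m1] module.span_scale[OF m2])
  qed
  moreover have "G \<subseteq> ?P"
    by (auto intro: module.span_base[OF m1] module.span_base[OF m2])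
  ultimately show "f ` module.span s1 G \<subseteq> module.span s2 (f ` G)"
    using module.span_minimal[OF m1] by blast
next
  have "module.subspace s2 (f ` module.span s1 G)"
  proof (rule module.subspaceI[OF m2])
    have "f 0 = 0"
      using f module.span_zero[OF m1] by (rule lin_on_zero)
    then show "0 \<in> f ` module.span s1 G"
      using module.span_zero[OF m1] by force
  next
    fix x y assume "x \<in> f ` module.span s1 G" "y \<in> f ` module.span s1 G"
    then obtain u v where uv: "u \<in> module.span s1 G" "v \<in> module.span s1 G" "x = f u" "y = f v"
      by blast
    then have "x + y = f (u + v)" using f unfolding lin_on_def by simp
    then show "x + y \<in> f ` module.span s1 G" using uv module.span_add[OF m1] by blast
  next
    fix c x assume "x \<in> f ` module.span s1 G"
    then obtain u where u: "u \<in> module.span s1 G" "x = f u" by blast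
    then have "s2 c x = f (s1 c u)" using f unfolding lin_on_def by simp
    then show "s2 c x \<in> f ` module.span s1 G" using u module.span_scale[OF m1] by blast
  qed
  then show "module.span s2 (f ` G) \<subseteq> f ` module.span s1 G"
    by (rule module.span_minimal[OF m2 image_mono[OF module.span_superset[OF m1]]])
qed

lemma module_canon_scale:
  fixes scaleV :: "'f::field \<Rightarrow> 'v::ab_group_add \<Rightarrow> 'v"
  assumes "vector_space scaleV"
  shows "module (canon_scale scaleV :: 'f \<Rightarrow> ('a \<Rightarrow> 'v) \<Rightarrow> 'a \<Rightarrow> 'v)"
  using assms unfolding module_def vector_space_def canon_scale_def
  by (auto simp: fun_eq_iff plus_fun_def)

text \<open>Unlike \<^const>\<open>equivalent_dil\<close>, the intertwining condition is stated for \<open>R\<close> itself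
  rather than through \<open>inv_into\<close>; this makes the notion closed under composition and inversion.\<close>
definition dilation_iso ::
  "('f \<Rightarrow> 'w1::ab_group_add \<Rightarrow> 'w1) \<Rightarrow> ('f \<Rightarrow> 'w2::ab_group_add \<Rightarrow> 'w2)
   \<Rightarrow> ('a \<Rightarrow> 'w1 \<Rightarrow> 'w1) \<Rightarrow> ('w1 \<Rightarrow> 'v) \<Rightarrow> ('v \<Rightarrow> 'w1) \<Rightarrow> 'w1 set
   \<Rightarrow> ('a \<Rightarrow> 'w2 \<Rightarrow> 'w2) \<Rightarrow> ('w2 \<Rightarrow> 'v) \<Rightarrow> ('v \<Rightarrow> 'w2) \<Rightarrow> 'w2 set \<Rightarrow> ('w1 \<Rightarrow> 'w2) \<Rightarrow> bool"
  where "dilation_iso scale1 scale2 \<pi>1 S1 T1 W1 \<pi>2 S2 T2 W2 R \<longleftrightarrow>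
     lin_on scale1 scale2 W1 R \<and> bij_betw R W1 W2 \<and>
     (\<forall>x. R (T1 x) = T2 x) \<and> (\<forall>w\<in>W1. S2 (R w) = S1 w) \<and>
     (\<forall>a. \<forall>w\<in>W1. R (\<pi>1 a w) = \<pi>2 a (R w))"

lemma dilation_iso_comp:
  assumes R: "dilation_iso scale1 scale2 \<pi>1 S1 T1 W1 \<pi>2 S2 T2 W2 R"
    and R': "dilation_iso scale2 scale3 \<pi>2 S2 T2 W2 \<pi>3 S3 T3 W3 R'"
  shows "dilation_iso scale1 scale3 \<pi>1 S1 T1 W1 \<pi>3 S3 T3 W3 (R' \<circ> R)"
proof -
  have RW: "R w \<in> W2" if "w \<in> W1" for w
    using R that unfolding dilation_iso_def by (auto dest: bij_betwE)
  have "lin_on scale1 scale3 W1 (R' \<circ> R)"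
    using R R' RW unfolding dilation_iso_def lin_on_def by simp
  moreover have "bij_betw (R' \<circ> R) W1 W3"
    using R R' unfolding dilation_iso_def by (blast intro: bij_betw_trans)
  ultimately show ?thesis
    using R R' RW unfolding dilation_iso_def by simp
qed

locale dilation_system =
  fixes scaleA :: "'f::field \<Rightarrow> 'a::ring_1 \<Rightarrow> 'a"
    and scaleV :: "'f \<Rightarrow> 'v::ab_group_add \<Rightarrow> 'v"
    and scaleW :: "'f \<Rightarrow> 'w::ab_group_add \<Rightarrow> 'w"
    and \<phi> :: "'a \<Rightarrow> 'v \<Rightarrow> 'v"
    and \<pi> :: "'a \<Rightarrow> 'w \<Rightarrow> 'w" and S :: "'w \<Rightarrow> 'v" and T :: "'v \<Rightarrow> 'w" and W :: "'w set"
  assumes linear_system: "linear_system scaleA scaleV \<phi>"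
    and hom_dilation: "hom_dilation scaleA scaleV scaleW \<phi> \<pi> S T W"
begin

lemma vector_space_V: "vector_space scaleV"
  using linear_system by (simp add: linear_system_def)

lemma module_W: "module scaleW"
  using hom_dilation by (simp add: hom_dilation_def module_iff_vector_space)

lemma subspace_W: "module.subspace scaleW W"
  using hom_dilation by (simp add: hom_dilation_def)

lemma zero_in_W: "0 \<in> W"
  using module.subspace_0[OF module_W subspace_W] .

lemma add_in_W: "x \<in> W \<Longrightarrow> y \<in> W \<Longrightarrow> x + y \<in> W"
  using module.subspace_add[OF module_W subspace_W] .

lemma scale_in_W: "x \<in> W \<Longrightarrow> scaleW c x \<in> W"
  using module.subspace_scale[OF module_W subspace_W] .

lemma diff_in_W: "x \<in> W \<Longrightarrow> y \<in> W \<Longrightarrow> x - y \<in> W"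
  using module.subspace_diff[OF module_W subspace_W] .

lemma pi_in_W: "w \<in> W \<Longrightarrow> \<pi> a w \<in> W"
  using hom_dilation by (simp add: hom_dilation_def)

lemma T_in_W: "T x \<in> W"
  using hom_dilation by (auto simp: hom_dilation_def)

lemma pi_add: "x \<in> W \<Longrightarrow> y \<in> W \<Longrightarrow> \<pi> a (x + y) = \<pi> a x + \<pi> a y"
  using hom_dilation by (simp add: hom_dilation_def lin_on_def)

lemma pi_scale: "x \<in> W \<Longrightarrow> \<pi> a (scaleW c x) = scaleW c (\<pi> a x)"
  using hom_dilation by (simp add: hom_dilation_def lin_on_def)

lemma pi_mult: "w \<in> W \<Longrightarrow> \<pi> (a * b) w = \<pi> a (\<pi> b w)"
  using hom_dilation by (simp add: hom_dilation_def)

lemma pi_one: "w \<in> W \<Longrightarrow> \<pi> 1 w = w"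
  using hom_dilation by (simp add: hom_dilation_def)

lemma S_add: "x \<in> W \<Longrightarrow> y \<in> W \<Longrightarrow> S (x + y) = S x + S y"
  using hom_dilation by (simp add: hom_dilation_def lin_on_def)

lemma S_scale: "x \<in> W \<Longrightarrow> S (scaleW c x) = scaleV c (S x)"
  using hom_dilation by (simp add: hom_dilation_def lin_on_def)

lemma phi_eq: "\<phi> a x = S (\<pi> a (T x))"
  using hom_dilation by (simp add: hom_dilation_def)

lemma equivalent_dil_if_iso:
  assumes "dilation_iso scaleW scale' \<pi> S T W \<pi>' S' T' W' R"
  shows "equivalent_dil scaleW scale' \<pi> S T W \<pi>' S' T' W'"
  unfolding equivalent_dil_def
proof (intro exI conjI ballI allI)
  have R: "lin_on scaleW scale' W R" "bij_betw R W W'" "\<forall>x. R (T x) = T' x"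
      "\<forall>w\<in>W. S' (R w) = S w" "\<forall>a. \<forall>w\<in>W. R (\<pi> a w) = \<pi>' a (R w)"
    using assms unfolding dilation_iso_def by blast+
  then show "lin_on scaleW scale' W R" "bij_betw R W W'" "R (T x) = T' x" for x
    by blast+
  show "S' (R w) = S w" if "w \<in> W" for w
    using R that by blast
  fix a w assume w: "w \<in> W"
  have "inv_into W R (\<pi>' a (R w)) = inv_into W R (R (\<pi> a w))"
    using R w by simp
  also have "\<dots> = \<pi> a w"
    using R(2) pi_in_W[OF w] by (simp add: bij_betw_def)
  finally show "\<pi> a w = inv_into W R (\<pi>' a (R w))" ..
qed

lemma dilation_iso_inv:
  assumes R: "dilation_iso scaleW scale' \<pi> S T W \<pi>' S' T' W' R"
  shows "dilation_iso scale' scaleW \<pi>' S' T' W' \<pi> S T W (inv_into W R)"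
proof -
  have lin: "lin_on scaleW scale' W R" and bij: "bij_betw R W W'"
    and RT: "\<And>x. R (T x) = T' x" and RS: "\<And>w. w \<in> W \<Longrightarrow> S' (R w) = S w"
    and Rpi: "\<And>a w. w \<in> W \<Longrightarrow> R (\<pi> a w) = \<pi>' a (R w)"
    using R unfolding dilation_iso_def by blast+
  have inv_R: "inv_into W R (R w) = w" if "w \<in> W" for w
    using bij that by (simp add: bij_betw_def)
  have from_W': "\<exists>w\<in>W. y = R w" if "y \<in> W'" for y
    using bij that by (auto simp: bij_betw_def)
  have "lin_on scale' scaleW W' (inv_into W R)"
    unfolding lin_on_def
  proof (intro conjI ballI allI)
    fix x y assume "x \<in> W'" "y \<in> W'"
    then obtain u v where uv: "u \<in> W" "v \<in> W" "x = R u" "y = R v" using from_W' by blast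
    then have "x + y = R (u + v)"
      using lin unfolding lin_on_def by simp
    then show "inv_into W R (x + y) = inv_into W R x + inv_into W R y"
      using uv add_in_W inv_R by simp
  next
    fix c x assume "x \<in> W'"
    then obtain u where u: "u \<in> W" "x = R u" using from_W' by blast
    then have "scale' c x = R (scaleW c u)"
      using lin unfolding lin_on_def by simp
    then show "inv_into W R (scale' c x) = scaleW c (inv_into W R x)"
      using u scale_in_W inv_R by simp
  qed
  moreover have "inv_into W R (T' x) = T x" for x
    using inv_R[OF T_in_W] RT by simp
  moreover have "S (inv_into W R y) = S' y" if "y \<in> W'" for y
    using from_W'[OF that] RS inv_R by auto
  moreover have "inv_into W R (\<pi>' a y) = \<pi> a (inv_into W R y)" if "y \<in> W'" for a y
    using from_W'[OF that] Rpi[symmetric] inv_R pi_in_W by auto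
  ultimately show ?thesis
    using bij_betw_inv_into[OF bij] unfolding dilation_iso_def by blast
qed

definition canon_map :: "'w \<Rightarrow> 'a \<Rightarrow> 'v"
  where "canon_map w = (\<lambda>b. S (\<pi> b w))"

lemma lin_on_canon_map: "lin_on scaleW (canon_scale scaleV) W canon_map"
  unfolding lin_on_def canon_map_def canon_scale_def
  by (simp add: fun_eq_iff plus_fun_def pi_add pi_scale S_add S_scale pi_in_W)

lemma canon_map_pi: "w \<in> W \<Longrightarrow> canon_map (\<pi> a w) = canon_pi a (canon_map w)"
  by (simp add: canon_map_def canon_pi_def fun_eq_iff pi_mult)

lemma canon_map_generator: "canon_map (\<pi> a (T x)) = canon_alpha \<phi> a x"
  by (simp add: canon_map_def canon_alpha_def fun_eq_iff pi_mult T_in_W phi_eq)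

lemma canon_map_T: "canon_map (T x) = canon_T \<phi> x"
  using canon_map_generator[of 1 x] by (simp add: canon_T_def pi_one T_in_W)

lemma canon_S_canon_map: "w \<in> W \<Longrightarrow> canon_S (canon_map w) = S w"
  by (simp add: canon_S_def canon_map_def pi_one)

lemma inj_on_canon_map:
  assumes "irreducible_dil scaleW \<pi> S W"
  shows "inj_on canon_map W"
proof -
  let ?K = "{w \<in> W. canon_map w = 0}"
  have add: "canon_map (x + y) = canon_map x + canon_map y" if "x \<in> W" "y \<in> W" for x y
    using lin_on_canon_map that unfolding lin_on_def by blast
  have "module.subspace scaleW ?K"
  proof (rule module.subspaceI[OF module_W])
    show "0 \<in> ?K"
      using lin_on_zero[OF lin_on_canon_map zero_in_W] zero_in_W by simp
  next
    fix x y assume "x \<in> ?K" "y \<in> ?K"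
    then show "x + y \<in> ?K" using add add_in_W by simp
  next
    fix c x assume "x \<in> ?K"
    moreover have "scaleV c 0 = 0"
      using vector_space_V by (simp add: module_iff_vector_space[symmetric] module.scale_zero_right)
    ultimately show "scaleW c x \<in> ?K"
      using lin_on_canon_map scale_in_W unfolding lin_on_def
      by (simp add: canon_scale_def zero_fun_def)
  qed
  moreover have "?K \<subseteq> {w \<in> W. S w = 0}"
  proof
    fix w assume "w \<in> ?K"
    then show "w \<in> {w \<in> W. S w = 0}"
      using canon_S_canon_map[of w] by (simp add: canon_S_def zero_fun_def)
  qed
  moreover have "\<forall>a. \<forall>w\<in>?K. \<pi> a w \<in> ?K"
    by (simp add: pi_in_W canon_map_pi canon_pi_def zero_fun_def)
  ultimately have kernel: "?K = {0}"
    using assms unfolding irreducible_dil_def by blast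
  show ?thesis
  proof (rule inj_onI)
    fix x y assume xy: "x \<in> W" "y \<in> W" "canon_map x = canon_map y"
    have "canon_map x = canon_map (x - y) + canon_map y"
      using add[OF diff_in_W[OF xy(1,2)] xy(2)] by simp
    then have "x - y \<in> ?K" using xy diff_in_W by simp
    then show "x = y" using kernel by simp
  qed
qed

lemma canon_map_image:
  assumes "linearly_minimal scaleW \<pi> T W"
  shows "canon_map ` W = canon_W scaleV \<phi>"
proof -
  let ?G = "{\<pi> a (T x) | a x. True}"
  have W: "W = module.span scaleW ?G"
    using assms unfolding linearly_minimal_def .
  have "canon_map ` W = module.span (canon_scale scaleV) (canon_map ` ?G)"
    using lin_on_image_span[OF module_W module_canon_scale[OF vector_space_V]]
      lin_on_canon_map[unfolded W] W by simp
  moreover have "canon_map ` ?G = {canon_alpha \<phi> a x | a x. True}"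
    unfolding canon_map_generator[symmetric] by blast
  ultimately show ?thesis
    unfolding canon_W_def by simp
qed

lemma dilation_iso_canon:
  assumes "principle_dilation scaleA scaleV scaleW \<phi> \<pi> S T W"
  shows "dilation_iso scaleW (canon_scale scaleV) \<pi> S T W
    canon_pi canon_S (canon_T \<phi>) (canon_W scaleV \<phi>) canon_map"
  using assms lin_on_canon_map inj_on_canon_map canon_map_image canon_map_T
    canon_S_canon_map canon_map_pi
  unfolding dilation_iso_def bij_betw_def principle_dilation_def by blast

end

theorem theorem3p3:
  fixes scaleA :: "'f::field \<Rightarrow> 'a::ring_1 \<Rightarrow> 'a"
    and scaleV :: "'f \<Rightarrow> 'v::ab_group_add \<Rightarrow> 'v"
    and \<phi> :: "'a \<Rightarrow> 'v \<Rightarrow> 'v"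
    and scale1 :: "'f \<Rightarrow> 'w1::ab_group_add \<Rightarrow> 'w1"
    and \<pi>1 :: "'a \<Rightarrow> 'w1 \<Rightarrow> 'w1" and S1 :: "'w1 \<Rightarrow> 'v" and T1 :: "'v \<Rightarrow> 'w1" and W1 :: "'w1 set"
    and scale2 :: "'f \<Rightarrow> 'w2::ab_group_add \<Rightarrow> 'w2"
    and \<pi>2 :: "'a \<Rightarrow> 'w2 \<Rightarrow> 'w2" and S2 :: "'w2 \<Rightarrow> 'v" and T2 :: "'v \<Rightarrow> 'w2" and W2 :: "'w2 set"
  assumes "linear_system scaleA scaleV \<phi>"
    and "principle_dilation scaleA scaleV scale1 \<phi> \<pi>1 S1 T1 W1"
    and "principle_dilation scaleA scaleV scale2 \<phi> \<pi>2 S2 T2 W2"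
  shows "equivalent_dil scale1 scale2 \<pi>1 S1 T1 W1 \<pi>2 S2 T2 W2 \<and>
         equivalent_dil scale1 (canon_scale scaleV) \<pi>1 S1 T1 W1
           canon_pi canon_S (canon_T \<phi>) (canon_W scaleV \<phi>)"
proof -
  interpret D1: dilation_system scaleA scaleV scale1 \<phi> \<pi>1 S1 T1 W1
    using assms(1,2) by unfold_locales (simp_all add: principle_dilation_def)
  interpret D2: dilation_system scaleA scaleV scale2 \<phi> \<pi>2 S2 T2 W2
    using assms(1,3) by unfold_locales (simp_all add: principle_dilation_def)
  have iso1: "dilation_iso scale1 (canon_scale scaleV) \<pi>1 S1 T1 W1
      canon_pi canon_S (canon_T \<phi>) (canon_W scaleV \<phi>) D1.canon_map"
    using assms(2) by (rule D1.dilation_iso_canon)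
  have iso2: "dilation_iso scale2 (canon_scale scaleV) \<pi>2 S2 T2 W2
      canon_pi canon_S (canon_T \<phi>) (canon_W scaleV \<phi>) D2.canon_map"
    using assms(3) by (rule D2.dilation_iso_canon)
  have "dilation_iso scale1 scale2 \<pi>1 S1 T1 W1 \<pi>2 S2 T2 W2 (inv_into W2 D2.canon_map \<circ> D1.canon_map)"
    using iso1 D2.dilation_iso_inv[OF iso2] by (rule dilation_iso_comp)
  then show ?thesis
    using D1.equivalent_dil_if_iso[OF iso1] by (blast intro: D1.equivalent_dil_if_iso)
qed

end
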